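(* Let $\mathcal{X}$ be a nonempty open convex subset of $\mathbb{R}^n$ and let $\textbf{F}:\mathcal{X}\to I(\mathbb{R})$ be $gH$-differentiable on $\mathcal{X}$. If $\textbf{F}$ is convex on $\mathcal{X}$, then \[\textbf{0}\preceq(x-y)^T\odot\nabla\textbf{F}(x)\ominus_{gH}(x-y)^T\odot\nabla\textbf{F}(y)\quad\text{for all }x,y\in\mathcal{X}.\]
   Context: $I(\mathbb{R})$: closed bounded intervals $\textbf{A}=[\underline{a},\overline{a}]$ with Moore arithmetic ($\oplus$ endpointwise; $\lambda\odot\textbf{A}=[\lambda\underline{a},\lambda\overline{a}]$ if $\lambda\ge0$, $[\lambda\overline{a},\lambda\underline{a}]$ if $\lambda<0$); $gH$-difference $\textbf{A}\ominus_{gH}\textbf{B}=[\min\{\underline{a}-\underline{b},\overline{a}-\overline{b}\},\max\{\underline{a}-\underline{b},\overline{a}-\overline{b}\}]$; limits in the norm $\max\{|\underline{a}|,|\overline{a}|\}$; $\textbf{0}=[0,0]$. $\textbf{A}\preceq\textbf{B}$ iff $\underline{a}\le\underline{b}$ and $\overline{a}\le\overline{b}$. An IVF is $\textbf{F}(x)=[\underline{f}(x),\overline{f}(x)]$. $D_i\textbf{F}(x)=\lim_{h\to0}\frac1h\odot(\textbf{F}(x+he_i)\ominus_{gH}\textbf{F}(x))$, $\nabla\textbf{F}(x)=(D_1\textbf{F}(x),\dots,D_n\textbf{F}(x))^T$, $d^T\odot\nabla\textbf{F}(x)=\bigoplus_i d_i\odot D_i\textbf{F}(x)$. Linear IVF: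 $\textbf{L}(x)=\bigoplus_i x_i\odot\textbf{L}(e_i)$. $\textbf{F}$ is $gH$-differentiable at $\bar{x}$ if there exist a linear IVF $\textbf{L}_{\bar{x}}$, an IVF $\textbf{E}(\textbf{F}(\bar{x});d)$ and $\delta>0$ with $(\textbf{F}(\bar{x}+d)\ominus_{gH}\textbf{F}(\bar{x}))\ominus_{gH}\textbf{L}_{\bar{x}}(d)=\lVert d\rVert\odot\textbf{E}(\textbf{F}(\bar{x});d)$ for $\lVert d\rVert<\delta$ and $\textbf{E}\to\textbf{0}$ as $\lVert d\rVert\to0$; on $\mathcal{X}$ means at every point. $\textbf{F}$ is convex if $\textbf{F}(\lambda x_1+(1-\lambda)x_2)\preceq\lambda\odot\textbf{F}(x_1)\oplus(1-\lambda)\odot\textbf{F}(x_2)$ for all $x_1,x_2\in\mathcal{X}$, $\lambda\in[0,1]$. *)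

theory Defs
  imports "HOL-Analysis.Analysis"
begin

text \<open>Closed bounded intervals [lo, hi] are represented as pairs (lo, hi) with lo \<le> hi.
  Moore addition is the componentwise addition of pairs.\<close>

type_synonym ivl = "real \<times> real"

definition is_ivl :: "ivl \<Rightarrow> bool" where
  "is_ivl A \<longleftrightarrow> fst A \<le> snd A"

definition iadd :: "ivl \<Rightarrow> ivl \<Rightarrow> ivl" where
  "iadd A B = (fst A + fst B, snd A + snd B)"

definition iscale :: "real \<Rightarrow> ivl \<Rightarrow> ivl" where
  "iscale l A = (if l \<ge> 0 then (l * fst A, l * snd A) else (l * snd A, l * fst A))"

definition gH_diff :: "ivl \<Rightarrow> ivl \<Rightarrow> ivl" where
  "gH_diff A B = (min (fst A - fst B) (snd A - snd B), max (fst A - fst B) (snd A - snd B))"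

definition inorm :: "ivl \<Rightarrow> real" where
  "inorm A = max \<bar>fst A\<bar> \<bar>snd A\<bar>"

definition ile :: "ivl \<Rightarrow> ivl \<Rightarrow> bool" where
  "ile A B \<longleftrightarrow> fst A \<le> fst B \<and> snd A \<le> snd B"

definition izero :: ivl where
  "izero = (0, 0)"

definition isum :: "('i \<Rightarrow> ivl) \<Rightarrow> 'i set \<Rightarrow> ivl" where
  "isum f I = (\<Sum>i\<in>I. fst (f i), \<Sum>i\<in>I. snd (f i))"

definition ilim :: "('a \<Rightarrow> ivl) \<Rightarrow> ivl \<Rightarrow> 'a filter \<Rightarrow> bool" where
  "ilim g D F \<longleftrightarrow> ((\<lambda>h. inorm (gH_diff (g h) D)) \<longlongrightarrow> 0) F"

definition has_gH_partial :: "(real^'n \<Rightarrow> ivl) \<Rightarrow> real^'n \<Rightarrow> 'n \<Rightarrow> ivl \<Rightarrow> bool" where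
  "has_gH_partial F x i D \<longleftrightarrow>
     ilim (\<lambda>h. iscale (1 / h) (gH_diff (F (x + h *\<^sub>R axis i 1)) (F x))) D (at 0)"

definition gH_partial :: "(real^'n \<Rightarrow> ivl) \<Rightarrow> 'n \<Rightarrow> real^'n \<Rightarrow> ivl" where
  "gH_partial F i x = (THE D. has_gH_partial F x i D)"

text \<open>d^T \<odot> \<nabla>F(x) = \<Oplus>_i d_i \<odot> D_i F(x).\<close>
definition dir_grad :: "(real^'n \<Rightarrow> ivl) \<Rightarrow> real^'n \<Rightarrow> real^'n \<Rightarrow> ivl" where
  "dir_grad F d x = isum (\<lambda>i. iscale (d $ i) (gH_partial F i x)) UNIV"

text \<open>Linear IVF determined by its values c i = L(e_i): L(x) = \<Oplus>_i x_i \<odot> L(e_i).\<close>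
definition lin_ivf :: "('n \<Rightarrow> ivl) \<Rightarrow> real^'n \<Rightarrow> ivl" where
  "lin_ivf c d = isum (\<lambda>i. iscale (d $ i) (c i)) UNIV"

definition gH_differentiable_at :: "(real^'n \<Rightarrow> ivl) \<Rightarrow> (real^'n) set \<Rightarrow> real^'n \<Rightarrow> bool" where
  "gH_differentiable_at F X xb \<longleftrightarrow>
     (\<exists>c E \<delta>. (\<forall>i. is_ivl (c i)) \<and> (\<forall>d. is_ivl (E d)) \<and> \<delta> > 0 \<and>
        (\<forall>d. norm d < \<delta> \<and> xb + d \<in> X \<longrightarrow>
           gH_diff (gH_diff (F (xb + d)) (F xb)) (lin_ivf c d) = iscale (norm d) (E d)) \<and>
        ilim E izero (at 0))"

definition gH_differentiable_on :: "(real^'n \<Rightarrow> ivl) \<Rightarrow> (real^'n) set \<Rightarrow> bool" where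
  "gH_differentiable_on F X \<longleftrightarrow> (\<forall>x\<in>X. gH_differentiable_at F X x)"

definition ivf_convex_on :: "(real^'n) set \<Rightarrow> (real^'n \<Rightarrow> ivl) \<Rightarrow> bool" where
  "ivf_convex_on X F \<longleftrightarrow>
     (\<forall>x1\<in>X. \<forall>x2\<in>X. \<forall>l::real. 0 \<le> l \<and> l \<le> 1 \<longrightarrow>
        ile (F (l *\<^sub>R x1 + (1 - l) *\<^sub>R x2)) (iadd (iscale l (F x1)) (iscale (1 - l) (F x2))))"

end

theory Submission
  imports Defs
begin

text \<open>At a point x of the open set, gH-differentiability makes the gH difference quotient
  (F(x + t v) \<ominus> F(x)) / t tend to v^T \<odot> \<nabla>F(x) as t \<rightarrow> 0, because the partial
  gH-derivatives are the values of the linear part on the unit vectors. Convexity of F means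
  that both endpoint functions are convex, and a convex real f satisfies
  f(y + t(x - y)) - f(y) \<le> f(x) - f(x + t(y - x)) for 0 \<le> t \<le> 1. Read endpointwise,
  the quotient at y in direction x - y lies below the negated quotient at x in direction
  y - x; letting t \<rightarrow> 0+ gives (x - y)^T \<odot> \<nabla>F(y) \<preceq> (x - y)^T \<odot> \<nabla>F(x), which is the claim.\<close>

definition gH_quotient :: "(real^'n \<Rightarrow> ivl) \<Rightarrow> real^'n \<Rightarrow> real^'n \<Rightarrow> real \<Rightarrow> ivl" where
  "gH_quotient F x v t = iscale (1 / t) (gH_diff (F (x + t *\<^sub>R v)) (F x))"

lemma has_gH_partial_iff_quotient:
  "has_gH_partial F x i D \<longleftrightarrow> ilim (gH_quotient F x (axis i 1)) D (at 0)"
  by (simp add: has_gH_partial_def gH_quotient_def [abs_def])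

lemma iscale_one [simp]: "iscale 1 A = A"
  by (simp add: iscale_def)

lemma iscale_iscale: "iscale s (iscale t A) = iscale (s * t) A"
  by (cases "s \<ge> 0"; cases "t \<ge> 0") (auto simp: iscale_def zero_le_mult_iff mult.assoc)

lemma iscale_isum: "iscale s (isum f I) = isum (\<lambda>i. iscale s (f i)) I"
  by (cases "s \<ge> 0") (auto simp: iscale_def isum_def sum_distrib_left)

lemma iscale_gH_diff: "iscale s (gH_diff A B) = gH_diff (iscale s A) (iscale s B)"
  by (cases "s \<ge> 0") (auto simp: iscale_def gH_diff_def min_mult_distrib_left
      max_mult_distrib_left right_diff_distrib min.commute max.commute)

lemma gH_diff_swap: "gH_diff B A = iscale (-1) (gH_diff A B)"
  by (auto simp: gH_diff_def iscale_def min_def max_def)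

lemma inorm_iscale: "inorm (iscale s A) = \<bar>s\<bar> * inorm A"
  by (cases "s \<ge> 0") (auto simp: inorm_def iscale_def abs_mult max_mult_distrib_left max.commute)

lemma inorm_gH_diff: "inorm (gH_diff A B) = max \<bar>fst A - fst B\<bar> \<bar>snd A - snd B\<bar>"
  by (auto simp: inorm_def gH_diff_def min_def max_def)

lemma inorm_gH_diff_izero: "inorm (gH_diff A izero) = inorm A"
  unfolding inorm_gH_diff by (simp add: inorm_def izero_def)

lemma ile_iscale: "ile A B \<Longrightarrow> 0 \<le> s \<Longrightarrow> ile (iscale s A) (iscale s B)"
  by (simp add: ile_def iscale_def mult_left_mono)

lemma ile_gH_diff:
  assumes "fst A - fst B \<le> fst C - fst D" and "snd A - snd B \<le> snd C - snd D"
  shows "ile (gH_diff A B) (gH_diff C D)"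
  using assms by (auto simp: ile_def gH_diff_def min_def max_def)

lemma ile_izero_gH_diff_iff: "ile izero (gH_diff A B) \<longleftrightarrow> ile B A"
  by (auto simp: ile_def izero_def gH_diff_def)

lemma lin_ivf_scaleR: "lin_ivf c (t *\<^sub>R v) = iscale t (lin_ivf c v)"
  by (simp add: lin_ivf_def iscale_isum iscale_iscale)

lemma lin_ivf_axis: "lin_ivf c (axis i 1) = c i"
proof -
  have "fst (iscale (axis i 1 $ j) (c j)) = (if j = i then fst (c i) else 0)"
    and "snd (iscale (axis i 1 $ j) (c j)) = (if j = i then snd (c i) else 0)" for j
    by (auto simp: axis_def iscale_def)
  then show ?thesis
    by (simp add: lin_ivf_def isum_def)
qed

lemma dir_grad_eq_lin_ivf: "dir_grad F d x = lin_ivf (\<lambda>i. gH_partial F i x) d"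
  by (simp add: dir_grad_def lin_ivf_def)

lemma dir_grad_scaleR: "dir_grad F (t *\<^sub>R d) x = iscale t (dir_grad F d x)"
  by (simp add: dir_grad_eq_lin_ivf lin_ivf_scaleR)

lemma ilim_imp_tendsto_fst:
  assumes "ilim g D F" shows "((\<lambda>h. fst (g h)) \<longlongrightarrow> fst D) F"
proof -
  have "((\<lambda>h. fst (g h) - fst D) \<longlongrightarrow> 0) F"
    by (rule Lim_null_comparison[of _ "\<lambda>h. inorm (gH_diff (g h) D)"])
      (use assms in \<open>auto simp: ilim_def inorm_gH_diff\<close>)
  then show ?thesis by (rule LIM_zero_cancel)
qed

lemma ilim_imp_tendsto_snd:
  assumes "ilim g D F" shows "((\<lambda>h. snd (g h)) \<longlongrightarrow> snd D) F"
proof -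
  have "((\<lambda>h. snd (g h) - snd D) \<longlongrightarrow> 0) F"
    by (rule Lim_null_comparison[of _ "\<lambda>h. inorm (gH_diff (g h) D)"])
      (use assms in \<open>auto simp: ilim_def inorm_gH_diff\<close>)
  then show ?thesis by (rule LIM_zero_cancel)
qed

lemma ilim_unique:
  assumes "F \<noteq> bot" and "ilim g D1 F" and "ilim g D2 F"
  shows "D1 = D2"
proof (rule prod_eqI)
  show "fst D1 = fst D2"
    using assms by (auto intro: tendsto_unique dest: ilim_imp_tendsto_fst)
  show "snd D1 = snd D2"
    using assms by (auto intro: tendsto_unique dest: ilim_imp_tendsto_snd)
qed

lemma ilim_mono: "ilim g D F \<Longrightarrow> F' \<le> F \<Longrightarrow> ilim g D F'"
  unfolding ilim_def by (rule tendsto_mono)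

lemma ilim_iscale: "ilim g D F \<Longrightarrow> ilim (\<lambda>h. iscale s (g h)) (iscale s D) F"
  unfolding ilim_def iscale_gH_diff [symmetric] inorm_iscale
  by (rule tendsto_mult_right_zero)

lemma ilim_le:
  assumes "F \<noteq> bot" and "ilim f A F" and "ilim g B F"
    and "eventually (\<lambda>h. ile (f h) (g h)) F"
  shows "ile A B"
  unfolding ile_def
proof
  show "fst A \<le> fst B"
    using assms(4) by (rule tendsto_le[OF assms(1) ilim_imp_tendsto_fst[OF assms(3)]
        ilim_imp_tendsto_fst[OF assms(2)] eventually_mono]) (simp add: ile_def)
  show "snd A \<le> snd B"
    using assms(4) by (rule tendsto_le[OF assms(1) ilim_imp_tendsto_snd[OF assms(3)]
        ilim_imp_tendsto_snd[OF assms(2)] eventually_mono]) (simp add: ile_def)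
qed

lemma eventually_at_zero_small_step_in_open:
  fixes x v :: "'a::real_normed_vector"
  assumes "open X" and "x \<in> X" and "0 < \<delta>"
  shows "eventually (\<lambda>t::real. norm (t *\<^sub>R v) < \<delta> \<and> x + t *\<^sub>R v \<in> X) (at 0)"
proof -
  have "((\<lambda>t. norm (t *\<^sub>R v)) \<longlongrightarrow> 0) (at (0::real))"
    by (intro tendsto_eq_intros) auto
  moreover have "((\<lambda>t. x + t *\<^sub>R v) \<longlongrightarrow> x) (at (0::real))"
    by (intro tendsto_eq_intros) auto
  ultimately show ?thesis
    using assms by (intro eventually_conj order_tendstoD(2) topological_tendstoD) auto
qed

lemma tendsto_inorm_along_ray:
  fixes v :: "'a::real_normed_vector"
  assumes "ilim E izero (at 0)"
  shows "((\<lambda>t::real. norm v * inorm (E (t *\<^sub>R v))) \<longlongrightarrow> 0) (at 0)"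
proof (cases "v = 0")
  case False
  have "((\<lambda>d. inorm (E d)) \<longlongrightarrow> 0) (at 0)"
    using assms by (simp add: ilim_def inorm_gH_diff_izero)
  moreover have "filterlim (\<lambda>t. t *\<^sub>R v) (at 0) (at (0::real))"
  proof (unfold filterlim_at, intro conjI)
    show "\<forall>\<^sub>F t in at 0. t *\<^sub>R v \<in> UNIV \<and> t *\<^sub>R v \<noteq> 0"
      using False by (simp add: eventually_at_filter)
    show "((\<lambda>t. t *\<^sub>R v) \<longlongrightarrow> 0) (at (0::real))"
      by (intro tendsto_eq_intros) auto
  qed
  ultimately show ?thesis
    by (intro tendsto_mult_right_zero) (rule filterlim_compose)
qed simp

lemma gH_quotient_tendsto_lin_ivf:
  assumes "open X" and "x \<in> X" and "0 < \<delta>"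
    and remainder: "\<forall>d. norm d < \<delta> \<and> x + d \<in> X \<longrightarrow>
      gH_diff (gH_diff (F (x + d)) (F x)) (lin_ivf c d) = iscale (norm d) (E d)"
    and "ilim E izero (at 0)"
  shows "ilim (gH_quotient F x v) (lin_ivf c v) (at 0)"
proof -
  have error_eq: "norm v * inorm (E (t *\<^sub>R v)) = inorm (gH_diff (gH_quotient F x v t) (lin_ivf c v))"
    if "t \<noteq> 0" and "norm (t *\<^sub>R v) < \<delta> \<and> x + t *\<^sub>R v \<in> X" for t
  proof -
    have "lin_ivf c v = iscale (1 / t) (lin_ivf c (t *\<^sub>R v))"
      using that(1) by (simp add: lin_ivf_scaleR iscale_iscale)
    then have "gH_diff (gH_quotient F x v t) (lin_ivf c v)
        = iscale (1 / t) (iscale (norm (t *\<^sub>R v)) (E (t *\<^sub>R v)))"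
      using remainder that(2) by (simp add: gH_quotient_def iscale_gH_diff [symmetric])
    then show ?thesis
      using that(1) by (simp add: inorm_iscale)
  qed
  from eventually_neq_at_within eventually_at_zero_small_step_in_open[OF assms(1-3)]
  have "eventually (\<lambda>t. norm v * inorm (E (t *\<^sub>R v))
      = inorm (gH_diff (gH_quotient F x v t) (lin_ivf c v))) (at 0)"
    by (rule eventually_elim2) (rule error_eq)
  with tendsto_inorm_along_ray[OF assms(5)] show ?thesis
    unfolding ilim_def by (rule Lim_transform_eventually)
qed

lemma gH_differentiable_at_imp_gH_quotient_tendsto:
  assumes "open X" and "x \<in> X" and "gH_differentiable_at F X x"
  shows "ilim (gH_quotient F x v) (dir_grad F v x) (at 0)"
proof -
  obtain c E \<delta> where "0 < \<delta>"
    and remainder: "\<forall>d. norm d < \<delta> \<and> x + d \<in> X \<longrightarrow>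
      gH_diff (gH_diff (F (x + d)) (F x)) (lin_ivf c d) = iscale (norm d) (E d)"
    and "ilim E izero (at 0)"
    using assms(3) unfolding gH_differentiable_at_def by blast
  then have lim: "ilim (gH_quotient F x w) (lin_ivf c w) (at 0)" for w
    using assms(1,2) by (intro gH_quotient_tendsto_lin_ivf)
  have "gH_partial F i x = c i" for i
    unfolding gH_partial_def
  proof (rule the_equality)
    show "has_gH_partial F x i (c i)"
      using lim[of "axis i 1"] by (simp add: has_gH_partial_iff_quotient lin_ivf_axis)
    show "D = c i" if "has_gH_partial F x i D" for D
      using that lim[of "axis i 1"]
      by (intro ilim_unique[of "at 0"]) (simp_all add: has_gH_partial_iff_quotient lin_ivf_axis)
  qed
  with lim show ?thesis
    by (simp add: dir_grad_eq_lin_ivf)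
qed

lemma gH_differentiable_on_imp_gH_quotient_tendsto_right:
  assumes "open X" and "gH_differentiable_on F X" and "x \<in> X"
  shows "ilim (gH_quotient F x v) (dir_grad F v x) (at_right 0)"
proof (rule ilim_mono)
  show "ilim (gH_quotient F x v) (dir_grad F v x) (at 0)"
    using assms unfolding gH_differentiable_on_def
    by (simp add: gH_differentiable_at_imp_gH_quotient_tendsto)
  show "at_right 0 \<le> at (0::real)"
    by (rule at_le) simp
qed

lemma ivf_convex_onD:
  assumes "ivf_convex_on X F" and "x \<in> X" and "y \<in> X" and "0 \<le> t" and "t \<le> 1"
  shows "fst (F ((1 - t) *\<^sub>R x + t *\<^sub>R y)) \<le> (1 - t) * fst (F x) + t * fst (F y)"
    and "snd (F ((1 - t) *\<^sub>R x + t *\<^sub>R y)) \<le> (1 - t) * snd (F x) + t * snd (F y)"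
proof -
  have "0 \<le> 1 - t" and "1 - t \<le> 1"
    using assms(4,5) by simp_all
  with assms(1-3) have "ile (F ((1 - t) *\<^sub>R x + (1 - (1 - t)) *\<^sub>R y))
      (iadd (iscale (1 - t) (F x)) (iscale (1 - (1 - t)) (F y)))"
    unfolding ivf_convex_on_def by blast
  with assms(4,5) show "fst (F ((1 - t) *\<^sub>R x + t *\<^sub>R y)) \<le> (1 - t) * fst (F x) + t * fst (F y)"
    and "snd (F ((1 - t) *\<^sub>R x + t *\<^sub>R y)) \<le> (1 - t) * snd (F x) + t * snd (F y)"
    by (simp_all add: ile_def iadd_def iscale_def)
qed

lemma ivf_convex_on_imp_convex_on_fst:
  "convex X \<Longrightarrow> ivf_convex_on X F \<Longrightarrow> convex_on X (\<lambda>x. fst (F x))"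
  by (rule convex_onI) (auto intro: ivf_convex_onD(1))

lemma ivf_convex_on_imp_convex_on_snd:
  "convex X \<Longrightarrow> ivf_convex_on X F \<Longrightarrow> convex_on X (\<lambda>x. snd (F x))"
  by (rule convex_onI) (auto intro: ivf_convex_onD(2))

lemma convex_on_opposite_increments:
  assumes "convex_on S f" and "x \<in> S" and "y \<in> S" and "0 \<le> t" and "t \<le> 1"
  shows "f (y + t *\<^sub>R (x - y)) - f y \<le> f x - f (x + t *\<^sub>R (y - x))"
proof -
  have "f ((1 - t) *\<^sub>R y + t *\<^sub>R x) \<le> (1 - t) * f y + t * f x"
    and "f ((1 - t) *\<^sub>R x + t *\<^sub>R y) \<le> (1 - t) * f x + t * f y"
    using assms by (simp_all add: convex_onD)
  moreover have "y + t *\<^sub>R (x - y) = (1 - t) *\<^sub>R y + t *\<^sub>R x"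
    and "x + t *\<^sub>R (y - x) = (1 - t) *\<^sub>R x + t *\<^sub>R y"
    by (simp_all add: algebra_simps)
  ultimately show ?thesis
    by (simp add: algebra_simps)
qed

lemma ivf_convex_on_gH_quotient_le:
  assumes "convex X" and "ivf_convex_on X F" and "x \<in> X" and "y \<in> X" and "0 < t" and "t \<le> 1"
  shows "ile (gH_quotient F y (x - y) t) (iscale (-1) (gH_quotient F x (y - x) t))"
proof -
  have "ile (gH_diff (F (y + t *\<^sub>R (x - y))) (F y)) (gH_diff (F x) (F (x + t *\<^sub>R (y - x))))"
  proof (rule ile_gH_diff)
    show "fst (F (y + t *\<^sub>R (x - y))) - fst (F y) \<le> fst (F x) - fst (F (x + t *\<^sub>R (y - x)))"
      using ivf_convex_on_imp_convex_on_fst[OF assms(1,2)] assms(3,4)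
        less_imp_le[OF assms(5)] assms(6) by (rule convex_on_opposite_increments)
    show "snd (F (y + t *\<^sub>R (x - y))) - snd (F y) \<le> snd (F x) - snd (F (x + t *\<^sub>R (y - x)))"
      using ivf_convex_on_imp_convex_on_snd[OF assms(1,2)] assms(3,4)
        less_imp_le[OF assms(5)] assms(6) by (rule convex_on_opposite_increments)
  qed
  then have "ile (gH_quotient F y (x - y) t) (iscale (1 / t) (gH_diff (F x) (F (x + t *\<^sub>R (y - x)))))"
    using assms(5) unfolding gH_quotient_def by (simp add: ile_iscale)
  then show ?thesis
    by (simp add: gH_quotient_def gH_diff_swap [of "F x"] iscale_iscale mult.commute)
qed

theorem theorem3p4:
  fixes X :: "(real^'n) set" and F :: "real^'n \<Rightarrow> ivl"
  assumes "X \<noteq> {}" and "open X" and "convex X"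
    and "\<forall>x\<in>X. is_ivl (F x)"
    and "gH_differentiable_on F X"
    and "ivf_convex_on X F"
  shows "\<forall>x\<in>X. \<forall>y\<in>X. ile izero (gH_diff (dir_grad F (x - y) x) (dir_grad F (x - y) y))"
proof (intro ballI)
  fix x y assume "x \<in> X" and "y \<in> X"
  have "dir_grad F (x - y) x = iscale (-1) (dir_grad F (y - x) x)"
    using dir_grad_scaleR[of F "-1" "y - x" x] by (simp add: iscale_iscale)
  with gH_differentiable_on_imp_gH_quotient_tendsto_right[OF assms(2,5) \<open>x \<in> X\<close>]
  have reflected_tendsto:
    "ilim (\<lambda>t. iscale (-1) (gH_quotient F x (y - x) t)) (dir_grad F (x - y) x) (at_right 0)"
    by (simp add: ilim_iscale)
  have "eventually (\<lambda>t. 0 < t \<and> t \<le> (1::real)) (at_right 0)"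
    unfolding eventually_at_right_field by (intro exI[of _ 1]) auto
  then have "eventually (\<lambda>t. ile (gH_quotient F y (x - y) t)
      (iscale (-1) (gH_quotient F x (y - x) t))) (at_right 0)"
    by (rule eventually_mono)
      (auto intro: ivf_convex_on_gH_quotient_le[OF assms(3,6) \<open>x \<in> X\<close> \<open>y \<in> X\<close>])
  then have "ile (dir_grad F (x - y) y) (dir_grad F (x - y) x)"
    using ilim_le[OF _ gH_differentiable_on_imp_gH_quotient_tendsto_right[OF assms(2,5) \<open>y \<in> X\<close>]
        reflected_tendsto] by simp
  then show "ile izero (gH_diff (dir_grad F (x - y) x) (dir_grad F (x - y) y))"
    by (simp add: ile_izero_gH_diff_iff)
qed

end
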